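(* Let $\pi$ be a positive continuous probability density on $\mathbb{R}$ and $q:\mathbb{R}^2\to[0,\infty)$ a bounded continuous function with $q(x,\cdot)$ a probability density for each $x$ and, for some $s>0$, $q(x,x+u)=0$ whenever $|u|>s$. Let $a>0$. Then the operators $T_a$, $T_{a^c}R_a$ and $(R_{a^c}+T_{a^c})^nR_a$ for every $n\ge1$ are compact on $L^2(\pi)$.
   Context: $L^2(\pi)$ is the $L^2$ space of the probability measure $\pi(y)dy$. Set $t(x,y):=\min(q(x,y),\pi(y)q(y,x)/\pi(x))$, $r(x):=1-\int_{\mathbb{R}}t(x,y)\,dy$, $(Tf)(x):=\int_{\mathbb{R}}f(y)t(x,y)\,dy$ and $(Rf)(x):=r(x)f(x)$. For a bounded operator $U$ on $L^2(\pi)$ define $U_af:=1_{[-a,a]}\cdot Uf$ and $U_{a^c}f:=1_{\mathbb{R}\setminus[-a,a]}\cdot Uf$. *)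

theory Defs
  imports "HOL-Analysis.Analysis"
begin

definition pimeas :: "(real \<Rightarrow> real) \<Rightarrow> real measure" where
  "pimeas \<pi> = density lborel (\<lambda>y. ennreal (\<pi> y))"

definition L2 :: "(real \<Rightarrow> real) \<Rightarrow> (real \<Rightarrow> real) \<Rightarrow> bool" where
  "L2 \<pi> f \<longleftrightarrow> f \<in> borel_measurable borel \<and> integrable (pimeas \<pi>) (\<lambda>x. (f x)\<^sup>2)"

definition L2norm :: "(real \<Rightarrow> real) \<Rightarrow> (real \<Rightarrow> real) \<Rightarrow> real" where
  "L2norm \<pi> f = sqrt (integral\<^sup>L (pimeas \<pi>) (\<lambda>x. (f x)\<^sup>2))"

text \<open>Compact operator on L2(pi): it maps L2(pi) into L2(pi) and maps every
  norm-bounded sequence to a sequence having an L2-Cauchy (hence, by completeness,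
  L2-convergent) subsequence, i.e. the image of the unit ball is relatively compact.\<close>

definition compact_op :: "(real \<Rightarrow> real) \<Rightarrow> ((real \<Rightarrow> real) \<Rightarrow> (real \<Rightarrow> real)) \<Rightarrow> bool" where
  "compact_op \<pi> U \<longleftrightarrow>
     (\<forall>f. L2 \<pi> f \<longrightarrow> L2 \<pi> (U f)) \<and>
     (\<forall>fs :: nat \<Rightarrow> real \<Rightarrow> real. (\<forall>n. L2 \<pi> (fs n)) \<and> (\<exists>B. \<forall>n. L2norm \<pi> (fs n) \<le> B) \<longrightarrow>
        (\<exists>r :: nat \<Rightarrow> nat. strict_mono r \<and>
           (\<forall>e>0. \<exists>N. \<forall>m\<ge>N. \<forall>n\<ge>N.
               L2norm \<pi> (\<lambda>x. U (fs (r m)) x - U (fs (r n)) x) < e)))"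

definition tker :: "(real \<Rightarrow> real) \<Rightarrow> (real \<Rightarrow> real \<Rightarrow> real) \<Rightarrow> real \<Rightarrow> real \<Rightarrow> real" where
  "tker \<pi> q x y = min (q x y) (\<pi> y * q y x / \<pi> x)"

definition rfun :: "(real \<Rightarrow> real) \<Rightarrow> (real \<Rightarrow> real \<Rightarrow> real) \<Rightarrow> real \<Rightarrow> real" where
  "rfun \<pi> q x = 1 - (\<integral>y. tker \<pi> q x y \<partial>lborel)"

definition Top :: "(real \<Rightarrow> real) \<Rightarrow> (real \<Rightarrow> real \<Rightarrow> real) \<Rightarrow> (real \<Rightarrow> real) \<Rightarrow> real \<Rightarrow> real" where
  "Top \<pi> q f x = (\<integral>y. f y * tker \<pi> q x y \<partial>lborel)"

definition Rop :: "(real \<Rightarrow> real) \<Rightarrow> (real \<Rightarrow> real \<Rightarrow> real) \<Rightarrow> (real \<Rightarrow> real) \<Rightarrow> real \<Rightarrow> real" where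
  "Rop \<pi> q f x = rfun \<pi> q x * f x"

definition restr_in :: "real \<Rightarrow> ((real \<Rightarrow> real) \<Rightarrow> (real \<Rightarrow> real)) \<Rightarrow> (real \<Rightarrow> real) \<Rightarrow> real \<Rightarrow> real" where
  "restr_in a U f x = indicator {-a..a} x * U f x"

definition restr_out :: "real \<Rightarrow> ((real \<Rightarrow> real) \<Rightarrow> (real \<Rightarrow> real)) \<Rightarrow> (real \<Rightarrow> real) \<Rightarrow> real \<Rightarrow> real" where
  "restr_out a U f x = indicator (UNIV - {-a..a}) x * U f x"

end

theory Submission
  imports Defs "HOL-Probability.Probability_Measure" "HOL-Complex_Analysis.Great_Picard"
begin

text \<open>All three operators are compact already as maps from L2(pi) into the bounded functions with
  the sup norm; this suffices because pi is a probability density, so uniformly Cauchy sequences are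
  L2(pi)-Cauchy. The kernel t is continuous, bounded and vanishes for |x - y| > s, and pi is bounded
  below on compact sets. Hence on [-b, b] the functions T f with ||f||_2 <= B are uniformly bounded
  and equicontinuous, and Arzela-Ascoli handles T_a, and also T R_a, whose values vanish outside
  [-(a + s), a + s]. Finally R_{a^c} R_a = 0, so
  (R_{a^c} + T_{a^c})^n R_a = (R_{a^c} + T_{a^c})^(n-1) T_{a^c} R_a, and R_{a^c} + T_{a^c} is
  2-Lipschitz for the sup norm because 0 <= r <= 1 and the integral of t(x, -) is at most 1.\<close>

section \<open>Operators that are compact into the sup norm\<close>

definition mult_op :: "(real \<Rightarrow> real) \<Rightarrow> (real \<Rightarrow> real) \<Rightarrow> real \<Rightarrow> real" where
  "mult_op h f x = h x * f x"

definition kernel_op :: "(real \<Rightarrow> real \<Rightarrow> real) \<Rightarrow> (real \<Rightarrow> real) \<Rightarrow> real \<Rightarrow> real" where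
  "kernel_op k f x = (\<integral>y. f y * k x y \<partial>lborel)"

definition bounded_borel :: "(real \<Rightarrow> real) \<Rightarrow> bool" where
  "bounded_borel u \<longleftrightarrow> u \<in> borel_measurable borel \<and> (\<exists>C. \<forall>x. \<bar>u x\<bar> \<le> C)"

definition sup_lipschitz :: "real \<Rightarrow> ((real \<Rightarrow> real) \<Rightarrow> real \<Rightarrow> real) \<Rightarrow> bool" where
  "sup_lipschitz L W \<longleftrightarrow> (\<forall>u. bounded_borel u \<longrightarrow> bounded_borel (W u)) \<and>
     (\<forall>u v e. bounded_borel u \<longrightarrow> bounded_borel v \<longrightarrow> (\<forall>x. \<bar>u x - v x\<bar> \<le> e) \<longrightarrow>
        (\<forall>x. \<bar>W u x - W v x\<bar> \<le> L * e))"

definition sup_compact_op :: "(real \<Rightarrow> real) \<Rightarrow> ((real \<Rightarrow> real) \<Rightarrow> real \<Rightarrow> real) \<Rightarrow> bool" where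
  "sup_compact_op \<pi> U \<longleftrightarrow> (\<forall>f. L2 \<pi> f \<longrightarrow> bounded_borel (U f)) \<and>
     (\<forall>(fs :: nat \<Rightarrow> real \<Rightarrow> real) B. (\<forall>n. L2 \<pi> (fs n) \<and> L2norm \<pi> (fs n) \<le> B) \<longrightarrow>
        (\<exists>r. strict_mono r \<and> uniformly_Cauchy_on UNIV (\<lambda>n. U (fs (r n)))))"

lemma restr_in_eq_mult_op: "restr_in a U = mult_op (indicator {-a..a}) \<circ> U"
  by (intro ext) (simp add: restr_in_def mult_op_def)

lemma restr_out_eq_mult_op: "restr_out a U = mult_op (indicator (UNIV - {-a..a})) \<circ> U"
  by (intro ext) (simp add: restr_out_def mult_op_def)

lemma bounded_borelI:
  "u \<in> borel_measurable borel \<Longrightarrow> (\<And>x. \<bar>u x\<bar> \<le> C) \<Longrightarrow> bounded_borel u"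
  unfolding bounded_borel_def by blast

lemma bounded_borelE:
  assumes "bounded_borel u"
  obtains C where "u \<in> borel_measurable borel" "\<And>x. \<bar>u x\<bar> \<le> C" "C \<ge> 0"
proof -
  obtain C where "u \<in> borel_measurable borel" "\<And>x. \<bar>u x\<bar> \<le> C"
    using assms unfolding bounded_borel_def by blast
  then show thesis
    using that[of "max C 0"] by (meson max.coboundedI1 max.cobounded2)
qed

lemma sup_lipschitzI:
  assumes "\<And>u. bounded_borel u \<Longrightarrow> bounded_borel (W u)"
    and "\<And>u v e x. bounded_borel u \<Longrightarrow> bounded_borel v \<Longrightarrow> (\<And>x. \<bar>u x - v x\<bar> \<le> e) \<Longrightarrow>
           \<bar>W u x - W v x\<bar> \<le> L * e"
  shows "sup_lipschitz L W"
  using assms unfolding sup_lipschitz_def by blast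

lemma sup_lipschitzD:
  assumes "sup_lipschitz L W"
  shows "bounded_borel u \<Longrightarrow> bounded_borel (W u)"
    and "bounded_borel u \<Longrightarrow> bounded_borel v \<Longrightarrow> (\<And>x. \<bar>u x - v x\<bar> \<le> e) \<Longrightarrow>
           \<bar>W u x - W v x\<bar> \<le> L * e"
  using assms unfolding sup_lipschitz_def by blast+

lemma sup_lipschitz_comp:
  assumes W: "sup_lipschitz L W" and V: "sup_lipschitz M V"
  shows "sup_lipschitz (L * M) (W \<circ> V)"
proof (rule sup_lipschitzI)
  fix u v e x assume u: "bounded_borel u" and v: "bounded_borel v" and e: "\<And>x. \<bar>u x - v x\<bar> \<le> e"
  have "\<bar>W (V u) x - W (V v) x\<bar> \<le> L * (M * e)"
    using sup_lipschitzD[OF V] u v e by (intro sup_lipschitzD(2)[OF W]) auto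
  then show "\<bar>(W \<circ> V) u x - (W \<circ> V) v x\<bar> \<le> L * M * e" by simp
qed (use sup_lipschitzD(1)[OF W] sup_lipschitzD(1)[OF V] in simp)

lemma sup_lipschitz_add:
  assumes W: "sup_lipschitz L W" and V: "sup_lipschitz M V"
  shows "sup_lipschitz (L + M) (\<lambda>u x. W u x + V u x)"
proof (rule sup_lipschitzI)
  fix u assume "bounded_borel u"
  then obtain C D where "W u \<in> borel_measurable borel" "\<And>x. \<bar>W u x\<bar> \<le> C"
    and "V u \<in> borel_measurable borel" "\<And>x. \<bar>V u x\<bar> \<le> D"
    by (metis bounded_borelE sup_lipschitzD(1) W V)
  then show "bounded_borel (\<lambda>x. W u x + V u x)"
    by (intro bounded_borelI[where C = "C + D"] borel_measurable_add)
       (auto intro: order_trans[OF abs_triangle_ineq add_mono])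
next
  fix u v e x assume "bounded_borel u" "bounded_borel v" "\<And>x. \<bar>u x - v x\<bar> \<le> e"
  then have "\<bar>W u x - W v x\<bar> \<le> L * e" "\<bar>V u x - V v x\<bar> \<le> M * e"
    using sup_lipschitzD(2)[OF W] sup_lipschitzD(2)[OF V] by blast+
  then show "\<bar>(W u x + V u x) - (W v x + V v x)\<bar> \<le> (L + M) * e"
    by (simp add: distrib_right)
qed

lemma sup_lipschitz_funpow:
  assumes "sup_lipschitz L W"
  shows "sup_lipschitz (L ^ n) (W ^^ n)"
proof (induction n)
  case 0
  show ?case by (rule sup_lipschitzI) auto
next
  case (Suc n)
  then show ?case
    using sup_lipschitz_comp[OF assms Suc] by (simp only: funpow.simps power_Suc)
qed

lemma abs_mult_le_of_abs_le_1: "\<bar>h\<bar> \<le> 1 \<Longrightarrow> \<bar>u\<bar> \<le> C \<Longrightarrow> \<bar>h * u\<bar> \<le> (C::real)"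
  using mult_mono[of "\<bar>h\<bar>" 1 "\<bar>u\<bar>" C] by (simp add: abs_mult)

lemma sup_lipschitz_mult_op:
  assumes h: "h \<in> borel_measurable borel" "\<And>x. \<bar>h x\<bar> \<le> 1"
  shows "sup_lipschitz 1 (mult_op h)"
proof (rule sup_lipschitzI)
  fix u assume "bounded_borel u"
  then obtain C where "u \<in> borel_measurable borel" "\<And>x. \<bar>u x\<bar> \<le> C" by (rule bounded_borelE) blast
  then show "bounded_borel (mult_op h u)"
    unfolding mult_op_def[abs_def] using h
    by (intro bounded_borelI[where C = C] borel_measurable_times abs_mult_le_of_abs_le_1) auto
next
  fix u v :: "real \<Rightarrow> real" and e x :: real
  assume "\<And>x. \<bar>u x - v x\<bar> \<le> e"
  then have "\<bar>h x * (u x - v x)\<bar> \<le> e" using h(2) by (intro abs_mult_le_of_abs_le_1)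
  then show "\<bar>mult_op h u x - mult_op h v x\<bar> \<le> 1 * e"
    unfolding mult_op_def by (simp add: right_diff_distrib)
qed

lemma sup_compact_op_comp:
  assumes W: "sup_lipschitz L W" and U: "sup_compact_op \<pi> U"
  shows "sup_compact_op \<pi> (W \<circ> U)"
  unfolding sup_compact_op_def
proof (intro conjI allI impI)
  show "L2 \<pi> f \<Longrightarrow> bounded_borel ((W \<circ> U) f)" for f
    using U sup_lipschitzD(1)[OF W] by (simp add: sup_compact_op_def)
next
  fix fs :: "nat \<Rightarrow> real \<Rightarrow> real" and B :: real
  assume fs: "\<forall>n. L2 \<pi> (fs n) \<and> L2norm \<pi> (fs n) \<le> B"
  then obtain r where r: "strict_mono r" and cauchy: "uniformly_Cauchy_on UNIV (\<lambda>n. U (fs (r n)))"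
    using U unfolding sup_compact_op_def by blast
  have bounded: "bounded_borel (U (fs n))" for n
    using U fs unfolding sup_compact_op_def by blast
  have "uniformly_Cauchy_on UNIV (\<lambda>n. W (U (fs (r n))))"
  proof (rule uniformly_Cauchy_onI)
    fix e :: real assume e: "e > 0"
    define d where "d = e / (\<bar>L\<bar> + 1)"
    have d: "d > 0" "\<bar>L\<bar> * d < e"
      using e by (auto simp: d_def field_simps)
    obtain M where M: "\<And>x m n. m \<ge> M \<Longrightarrow> n \<ge> M \<Longrightarrow> dist (U (fs (r m)) x) (U (fs (r n)) x) < d"
      using cauchy d(1) unfolding uniformly_Cauchy_on_def by blast
    have "\<bar>W (U (fs (r m))) x - W (U (fs (r n))) x\<bar> < e" if "m \<ge> M" "n \<ge> M" for m n x
    proof -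
      have "\<bar>W (U (fs (r m))) x - W (U (fs (r n))) x\<bar> \<le> L * d"
        using M[OF that] by (intro sup_lipschitzD(2)[OF W bounded bounded]) (simp add: dist_real_def less_imp_le)
      also have "\<dots> \<le> \<bar>L\<bar> * d" using d by (intro mult_right_mono) auto
      finally show ?thesis using d by linarith
    qed
    then show "\<exists>M. \<forall>x\<in>UNIV. \<forall>m\<ge>M. \<forall>n\<ge>M. dist (W (U (fs (r m))) x) (W (U (fs (r n))) x) < e"
      by (auto simp: dist_real_def)
  qed
  then show "\<exists>r. strict_mono r \<and> uniformly_Cauchy_on UNIV (\<lambda>n. (W \<circ> U) (fs (r n)))"
    using r by auto
qed

lemma sup_lipschitz_mult_indicator: "A \<in> sets borel \<Longrightarrow> sup_lipschitz 1 (mult_op (indicator A))"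
  by (intro sup_lipschitz_mult_op borel_measurable_indicator) (auto simp: indicator_def)

lemma compl_atLeastAtMost_borel: "UNIV - {a..b} \<in> sets (borel :: real measure)"
  by (intro borel_open open_Diff) auto

lemma sup_compact_op_restr_out: "sup_compact_op \<pi> U \<Longrightarrow> sup_compact_op \<pi> (restr_out a U)"
  unfolding restr_out_eq_mult_op
  by (rule sup_compact_op_comp[OF sup_lipschitz_mult_indicator[OF compl_atLeastAtMost_borel]])

lemma uniformly_Cauchy_on_UNIV_mult_indicator:
  assumes "uniformly_Cauchy_on S f"
  shows "uniformly_Cauchy_on UNIV (\<lambda>n x. indicator S x * f n x :: real)"
proof (rule uniformly_Cauchy_onI)
  fix e :: real assume "e > 0"
  then obtain M where "\<And>x m n. x \<in> S \<Longrightarrow> m \<ge> M \<Longrightarrow> n \<ge> M \<Longrightarrow> dist (f m x) (f n x) < e"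
    using assms unfolding uniformly_Cauchy_on_def by blast
  then show "\<exists>M. \<forall>x\<in>UNIV. \<forall>m\<ge>M. \<forall>n\<ge>M.
      dist (indicator S x * f m x) (indicator S x * f n x) < e"
    using \<open>e > 0\<close> by (intro exI[of _ M]) (auto simp: indicator_def)
qed

section \<open>The space L2(pi) of a probability density\<close>

lemma sets_pimeas [simp]: "sets (pimeas \<pi>) = sets borel"
  by (simp add: pimeas_def sets_lborel)

lemma measurable_pimeas_iff [simp]: "f \<in> borel_measurable (pimeas \<pi>) \<longleftrightarrow> f \<in> borel_measurable borel"
  by (simp add: measurable_cong_sets[OF sets_pimeas refl])

lemma
  fixes f :: "real \<Rightarrow> real"
  assumes \<pi>: "\<pi> \<in> borel_measurable borel" "\<And>x. 0 \<le> \<pi> x" and f: "f \<in> borel_measurable borel"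
  shows integral_pimeas: "integral\<^sup>L (pimeas \<pi>) f = (\<integral>y. \<pi> y * f y \<partial>lborel)"
    and integrable_pimeas_iff: "integrable (pimeas \<pi>) f \<longleftrightarrow> integrable lborel (\<lambda>y. \<pi> y * f y)"
  unfolding pimeas_def using assms
  by (simp_all add: integral_density integrable_density)

lemma prob_space_pimeas:
  assumes "\<pi> \<in> borel_measurable borel" "\<And>x. 0 \<le> \<pi> x" "integrable lborel \<pi>" "(\<integral>y. \<pi> y \<partial>lborel) = 1"
  shows "prob_space (pimeas \<pi>)"
proof
  have "emeasure (pimeas \<pi>) (space (pimeas \<pi>)) = (\<integral>\<^sup>+y. ennreal (\<pi> y) \<partial>lborel)"
    unfolding pimeas_def using assms(1) by (subst emeasure_density) auto
  also have "\<dots> = ennreal (\<integral>y. \<pi> y \<partial>lborel)"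
    using assms by (subst nn_integral_eq_integral) auto
  finally show "emeasure (pimeas \<pi>) (space (pimeas \<pi>)) = 1"
    using assms(4) by simp
qed

lemma L2norm_nonneg: "0 \<le> L2norm \<pi> f"
  unfolding L2norm_def by (simp add: Bochner_Integration.integral_nonneg)

lemma L2_if_bounded_borel:
  assumes "prob_space (pimeas \<pi>)" "bounded_borel f"
  shows "L2 \<pi> f"
proof -
  interpret prob_space "pimeas \<pi>" by fact
  obtain C where f: "f \<in> borel_measurable borel" "\<And>x. \<bar>f x\<bar> \<le> C" "C \<ge> 0"
    using assms(2) by (rule bounded_borelE) blast
  have "(f x)\<^sup>2 \<le> C\<^sup>2" for x
    using f(2)[of x] f(3) abs_le_square_iff[of "f x" C] by simp
  then have "integrable (pimeas \<pi>) (\<lambda>x. (f x)\<^sup>2)"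
    using f(1) by (intro integrable_const_bound[where B = "C\<^sup>2"]) auto
  then show ?thesis using f(1) by (simp add: L2_def)
qed

lemma L2norm_le_of_abs_le:
  assumes "prob_space (pimeas \<pi>)" "f \<in> borel_measurable borel" "\<And>x. \<bar>f x\<bar> \<le> C"
  shows "L2norm \<pi> f \<le> C"
proof -
  interpret prob_space "pimeas \<pi>" by fact
  have C: "C \<ge> 0" using assms(3)[of 0] by linarith
  have sq: "(f x)\<^sup>2 \<le> C\<^sup>2" for x
    using assms(3)[of x] C abs_le_square_iff[of "f x" C] by simp
  have "L2 \<pi> f" using assms by (intro L2_if_bounded_borel bounded_borelI) auto
  then have "integral\<^sup>L (pimeas \<pi>) (\<lambda>x. (f x)\<^sup>2) \<le> integral\<^sup>L (pimeas \<pi>) (\<lambda>x. C\<^sup>2)"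
    using sq by (intro integral_mono) (auto simp: L2_def)
  also have "\<dots> = C\<^sup>2" using prob_space.prob_space[OF assms(1)] by simp
  finally have "L2norm \<pi> f \<le> sqrt (C\<^sup>2)"
    unfolding L2norm_def by (rule real_sqrt_le_mono)
  then show ?thesis using C by simp
qed

lemma L2_mult_op:
  assumes h: "h \<in> borel_measurable borel" "\<And>x. \<bar>h x\<bar> \<le> 1" and f: "L2 \<pi> f"
  shows "L2 \<pi> (mult_op h f)" "L2norm \<pi> (mult_op h f) \<le> L2norm \<pi> f"
proof -
  have "f \<in> borel_measurable borel" using f by (simp add: L2_def)
  then have meas: "mult_op h f \<in> borel_measurable borel"
    unfolding mult_op_def[abs_def] using h(1) by (intro borel_measurable_times)
  have sq: "(mult_op h f x)\<^sup>2 \<le> (f x)\<^sup>2" for x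
    using abs_mult_le_of_abs_le_1[OF h(2) order_refl, of x "f x"] abs_le_square_iff[of "h x * f x" "f x"]
    unfolding mult_op_def by simp
  have int: "integrable (pimeas \<pi>) (\<lambda>x. (f x)\<^sup>2)" using f by (simp add: L2_def)
  then have "integrable (pimeas \<pi>) (\<lambda>x. (mult_op h f x)\<^sup>2)"
    using meas sq by (intro Bochner_Integration.integrable_bound[OF int]) auto
  then show "L2 \<pi> (mult_op h f)" using meas by (simp add: L2_def)
  then show "L2norm \<pi> (mult_op h f) \<le> L2norm \<pi> f"
    unfolding L2norm_def using int sq by (intro real_sqrt_le_mono integral_mono) (auto simp: L2_def)
qed

lemma integral_abs_le_L2norm:
  assumes "prob_space (pimeas \<pi>)" "L2 \<pi> f"
  shows "integrable (pimeas \<pi>) f" "(\<integral>x. \<bar>f x\<bar> \<partial>pimeas \<pi>) \<le> L2norm \<pi> f"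
proof -
  interpret prob_space "pimeas \<pi>" by fact
  have f: "f \<in> borel_measurable (pimeas \<pi>)" "integrable (pimeas \<pi>) (\<lambda>x. (f x)\<^sup>2)"
    using assms(2) by (simp_all add: L2_def)
  then show int: "integrable (pimeas \<pi>) f"
    by (rule square_integrable_imp_integrable)
  have "integrable (pimeas \<pi>) (\<lambda>x. \<bar>f x\<bar>\<^sup>2)" using f(2) by simp
  then have "variance (\<lambda>x. \<bar>f x\<bar>) = (\<integral>x. \<bar>f x\<bar>\<^sup>2 \<partial>pimeas \<pi>) - (\<integral>x. \<bar>f x\<bar> \<partial>pimeas \<pi>)\<^sup>2"
    using integrable_abs[OF int] by (intro variance_eq)
  then have "(\<integral>x. \<bar>f x\<bar> \<partial>pimeas \<pi>)\<^sup>2 \<le> (\<integral>x. (f x)\<^sup>2 \<partial>pimeas \<pi>)"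
    using variance_positive[of "\<lambda>x. \<bar>f x\<bar>"] by simp
  then show "(\<integral>x. \<bar>f x\<bar> \<partial>pimeas \<pi>) \<le> L2norm \<pi> f"
    unfolding L2norm_def by (rule real_le_rsqrt)
qed

lemma compact_op_if_sup_compact_op:
  assumes \<pi>: "prob_space (pimeas \<pi>)" and U: "sup_compact_op \<pi> U"
  shows "compact_op \<pi> U"
  unfolding compact_op_def
proof (intro conjI allI impI)
  show "L2 \<pi> f \<Longrightarrow> L2 \<pi> (U f)" for f
    using U by (intro L2_if_bounded_borel[OF \<pi>]) (simp add: sup_compact_op_def)
next
  fix fs :: "nat \<Rightarrow> real \<Rightarrow> real"
  assume "(\<forall>n. L2 \<pi> (fs n)) \<and> (\<exists>B. \<forall>n. L2norm \<pi> (fs n) \<le> B)"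
  then obtain B where fs: "\<forall>n. L2 \<pi> (fs n) \<and> L2norm \<pi> (fs n) \<le> B" by blast
  then obtain r where r: "strict_mono r" and cauchy: "uniformly_Cauchy_on UNIV (\<lambda>n. U (fs (r n)))"
    using U unfolding sup_compact_op_def by blast
  have meas: "U (fs n) \<in> borel_measurable borel" for n
    using U fs unfolding sup_compact_op_def bounded_borel_def by blast
  show "\<exists>r :: nat \<Rightarrow> nat. strict_mono r \<and> (\<forall>e>0. \<exists>N. \<forall>m\<ge>N. \<forall>n\<ge>N.
      L2norm \<pi> (\<lambda>x. U (fs (r m)) x - U (fs (r n)) x) < e)"
  proof (intro exI[of _ r] conjI r allI impI)
    fix e :: real assume "e > 0"
    then obtain N where N: "\<And>x m n. m \<ge> N \<Longrightarrow> n \<ge> N \<Longrightarrow> dist (U (fs (r m)) x) (U (fs (r n)) x) < e / 2"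
      using cauchy unfolding uniformly_Cauchy_on_def by (meson half_gt_zero iso_tuple_UNIV_I)
    have "L2norm \<pi> (\<lambda>x. U (fs (r m)) x - U (fs (r n)) x) < e" if "m \<ge> N" "n \<ge> N" for m n
    proof -
      have "L2norm \<pi> (\<lambda>x. U (fs (r m)) x - U (fs (r n)) x) \<le> e / 2"
        using N[OF that] meas by (intro L2norm_le_of_abs_le[OF \<pi>]) (auto simp: dist_real_def less_imp_le)
      then show ?thesis using \<open>e > 0\<close> by linarith
    qed
    then show "\<exists>N. \<forall>m\<ge>N. \<forall>n\<ge>N. L2norm \<pi> (\<lambda>x. U (fs (r m)) x - U (fs (r n)) x) < e"
      by blast
  qed
qed

locale positive_density =
  fixes \<pi> :: "real \<Rightarrow> real"
  assumes pi_pos: "\<And>x. 0 < \<pi> x"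
    and pi_cont: "continuous_on UNIV \<pi>"
    and pi_int: "integrable lborel \<pi>"
    and pi_one: "(\<integral>y. \<pi> y \<partial>lborel) = 1"
begin

lemma pi_measurable: "\<pi> \<in> borel_measurable borel"
  using pi_cont by (rule borel_measurable_continuous_onI)

lemma pimeas_prob_space: "prob_space (pimeas \<pi>)"
  using pi_measurable pi_int pi_one pi_pos by (intro prob_space_pimeas) (auto intro: less_imp_le)

lemma pi_bounded_below:
  obtains m where "m > 0" "\<And>y. \<bar>y\<bar> \<le> c \<Longrightarrow> m \<le> \<pi> y"
proof (cases "c \<ge> 0")
  case True
  have "continuous_on {-c..c} \<pi>" using pi_cont continuous_on_subset by blast
  then obtain y0 where "y0 \<in> {-c..c}" "\<And>y. y \<in> {-c..c} \<Longrightarrow> \<pi> y0 \<le> \<pi> y"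
    using continuous_attains_inf[of "{-c..c}" \<pi>] True by auto
  then show thesis using that[of "\<pi> y0"] pi_pos by (auto simp: abs_le_iff)
next
  case False
  then show thesis using that[of 1] by auto
qed

lemma weighted_L1_le_L2norm:
  assumes f: "L2 \<pi> f"
  shows "integrable lborel (\<lambda>y. \<pi> y * \<bar>f y\<bar>)" "(\<integral>y. \<pi> y * \<bar>f y\<bar> \<partial>lborel) \<le> L2norm \<pi> f"
proof -
  have f_abs: "(\<lambda>y. \<bar>f y\<bar>) \<in> borel_measurable borel"
    using f unfolding L2_def by (blast intro: borel_measurable_abs)
  have "integrable (pimeas \<pi>) (\<lambda>y. \<bar>f y\<bar>)"
    using integral_abs_le_L2norm(1)[OF pimeas_prob_space f] by simp
  then show "integrable lborel (\<lambda>y. \<pi> y * \<bar>f y\<bar>)"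
    using integrable_pimeas_iff[OF pi_measurable _ f_abs] pi_pos by (simp add: less_imp_le)
  show "(\<integral>y. \<pi> y * \<bar>f y\<bar> \<partial>lborel) \<le> L2norm \<pi> f"
    using integral_pimeas[OF pi_measurable _ f_abs] pi_pos integral_abs_le_L2norm(2)[OF pimeas_prob_space f]
    by (simp add: less_imp_le)
qed

text \<open>Where \<open>g\<close> lives, \<open>\<pi> \<ge> m\<close>, so \<open>\<bar>f g\<bar> \<le> E / m \<cdot> \<pi> \<bar>f\<bar>\<close>.\<close>

lemma integral_times_compact_support:
  assumes f: "L2 \<pi> f"
    and g: "g \<in> borel_measurable borel" "\<And>y. \<bar>g y\<bar> \<le> E" "\<And>y. \<bar>y\<bar> > c \<Longrightarrow> g y = 0"
    and m: "m > 0" "\<And>y. \<bar>y\<bar> \<le> c \<Longrightarrow> m \<le> \<pi> y"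
  shows "integrable lborel (\<lambda>y. f y * g y)"
    and "\<bar>\<integral>y. f y * g y \<partial>lborel\<bar> \<le> E / m * L2norm \<pi> f"
proof -
  have E: "E \<ge> 0" using g(2)[of 0] by linarith
  have dom: "\<bar>f y * g y\<bar> \<le> E / m * (\<pi> y * \<bar>f y\<bar>)" for y
  proof (cases "\<bar>y\<bar> \<le> c")
    case True
    have "E * 1 \<le> E * (\<pi> y / m)"
      using m(1) m(2)[OF True] E by (intro mult_left_mono) simp_all
    then have "\<bar>g y\<bar> \<le> E / m * \<pi> y" using g(2)[of y] by simp
    then have "\<bar>f y * g y\<bar> \<le> \<bar>f y\<bar> * (E / m * \<pi> y)"
      unfolding abs_mult by (rule mult_left_mono) simp
    then show ?thesis by (simp add: ac_simps)
  next
    case False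
    then show ?thesis using g(3) E m(1) pi_pos[of y] by simp
  qed
  have int_dom: "integrable lborel (\<lambda>y. E / m * (\<pi> y * \<bar>f y\<bar>))"
    using weighted_L1_le_L2norm(1)[OF f] by simp
  have "norm (f y * g y) \<le> norm (E / m * (\<pi> y * \<bar>f y\<bar>))" for y
  proof -
    have "0 \<le> E / m * (\<pi> y * \<bar>f y\<bar>)"
      using E m(1) pi_pos[of y] by (intro mult_nonneg_nonneg) auto
    then show ?thesis using dom[of y] by (simp only: real_norm_def abs_of_nonneg)
  qed
  then have "AE y in lborel. norm (f y * g y) \<le> norm (E / m * (\<pi> y * \<bar>f y\<bar>))"
    by (rule AE_I2)
  moreover have "(\<lambda>y. f y * g y) \<in> borel_measurable lborel"
    unfolding measurable_lborel2 using f g(1) by (intro borel_measurable_times) (simp_all add: L2_def)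
  ultimately show int: "integrable lborel (\<lambda>y. f y * g y)"
    by (intro Bochner_Integration.integrable_bound[OF int_dom])
  have "\<bar>\<integral>y. f y * g y \<partial>lborel\<bar> \<le> (\<integral>y. E / m * (\<pi> y * \<bar>f y\<bar>) \<partial>lborel)"
    by (rule integral_abs_bound_integral[OF int int_dom dom])
  also have "\<dots> = E / m * (\<integral>y. \<pi> y * \<bar>f y\<bar> \<partial>lborel)"
    by simp
  also have "\<dots> \<le> E / m * L2norm \<pi> f"
    using weighted_L1_le_L2norm(2)[OF f] E m(1) by (intro mult_left_mono) auto
  finally show "\<bar>\<integral>y. f y * g y \<partial>lborel\<bar> \<le> E / m * L2norm \<pi> f" .
qed

end

section \<open>Kernel operators of bounded bandwidth\<close>

lemma borel_measurable_integral_lborel: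
  fixes g :: "real \<Rightarrow> real \<Rightarrow> real"
  assumes "(\<lambda>z. g (fst z) (snd z)) \<in> borel_measurable borel"
  shows "(\<lambda>x. \<integral>y. g x y \<partial>lborel) \<in> borel_measurable borel"
proof -
  have "sets (borel \<Otimes>\<^sub>M lborel) = sets (borel \<Otimes>\<^sub>M (borel :: real measure))"
    by (rule sets_pair_measure_cong) (auto simp: sets_lborel)
  also have "\<dots> = sets (borel :: (real \<times> real) measure)"
    by (rule arg_cong[where f = sets, OF borel_prod])
  finally have "case_prod g \<in> borel_measurable (borel \<Otimes>\<^sub>M lborel)"
    using assms by (subst measurable_cong_sets[OF _ refl]) (simp_all add: case_prod_beta')
  then show ?thesis by (rule lborel.borel_measurable_lebesgue_integral)
qed

locale banded_kernel = positive_density +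
  fixes k :: "real \<Rightarrow> real \<Rightarrow> real" and s Q :: real
  assumes k_nonneg: "\<And>x y. 0 \<le> k x y"
    and k_le: "\<And>x y. k x y \<le> Q"
    and k_cont: "continuous_on UNIV (\<lambda>(x, y). k x y)"
    and k_band: "\<And>x y. \<bar>x - y\<bar> > s \<Longrightarrow> k x y = 0"
    and k_mass: "\<And>x. (\<integral>y. k x y \<partial>lborel) \<le> 1"
begin

lemma k_measurable: "(\<lambda>z. k (fst z) (snd z)) \<in> borel_measurable borel"
  using k_cont by (intro borel_measurable_continuous_onI) (simp add: case_prod_beta')

lemma k_section_measurable: "k x \<in> borel_measurable borel"
proof -
  have "continuous_on UNIV (k x)"
    using continuous_on_compose2[OF k_cont, of UNIV "\<lambda>y. (x, y)"] by (simp add: continuous_intros)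
  then show ?thesis by (rule borel_measurable_continuous_onI)
qed

lemma kernel_op_measurable:
  assumes "f \<in> borel_measurable borel"
  shows "kernel_op k f \<in> borel_measurable borel"
proof -
  have "snd \<in> borel_measurable (borel :: (real \<times> real) measure)"
    by (intro borel_measurable_continuous_onI continuous_intros)
  then have "(\<lambda>z. f (snd z)) \<in> borel_measurable (borel :: (real \<times> real) measure)"
    using assms by (rule measurable_compose)
  then have "(\<lambda>z. f (snd z) * k (fst z) (snd z)) \<in> borel_measurable borel"
    using k_measurable by (rule borel_measurable_times)
  then show ?thesis
    unfolding kernel_op_def[abs_def] by (rule borel_measurable_integral_lborel)
qed

lemma kernel_mass_measurable: "(\<lambda>x. \<integral>y. k x y \<partial>lborel) \<in> borel_measurable borel"
  using k_measurable by (rule borel_measurable_integral_lborel)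

lemma kernel_mass_nonneg: "0 \<le> (\<integral>y. k x y \<partial>lborel)"
  using k_nonneg by (simp add: Bochner_Integration.integral_nonneg)

lemma Q_nonneg: "0 \<le> Q"
  using k_nonneg[of 0 0] k_le[of 0 0] by linarith

lemma k_vanishes:
  assumes "\<bar>x\<bar> \<le> b" "\<bar>y\<bar> > b + s"
  shows "k x y = 0"
proof -
  have "\<bar>x - y\<bar> > s" using assms by linarith
  then show ?thesis by (rule k_band)
qed

lemma k_section_bounded_support:
  "\<bar>x\<bar> \<le> b \<Longrightarrow> \<bar>k x y\<bar> \<le> Q" "\<bar>x\<bar> \<le> b \<Longrightarrow> \<bar>y\<bar> > b + s \<Longrightarrow> k x y = 0"
  using k_nonneg[of x y] k_le[of x y] k_vanishes by auto

lemma kernel_op_le: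
  assumes f: "L2 \<pi> f" and x: "\<bar>x\<bar> \<le> b"
    and m: "m > 0" "\<And>y. \<bar>y\<bar> \<le> b + s \<Longrightarrow> m \<le> \<pi> y"
  shows "\<bar>kernel_op k f x\<bar> \<le> Q / m * L2norm \<pi> f"
  unfolding kernel_op_def using k_section_measurable k_section_bounded_support[OF x]
  by (rule integral_times_compact_support(2)[OF f _ _ _ m])

lemma kernel_integrable:
  assumes f: "L2 \<pi> f"
  shows "integrable lborel (\<lambda>y. f y * k x y)"
proof -
  obtain m where "m > 0" "\<And>y. \<bar>y\<bar> \<le> \<bar>x\<bar> + s \<Longrightarrow> m \<le> \<pi> y"
    by (rule pi_bounded_below) blast
  with k_section_measurable k_section_bounded_support[OF order_refl] show ?thesis
    by (rule integral_times_compact_support(1)[OF f])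
qed

lemma kernel_op_diff_le:
  assumes f: "L2 \<pi> f" and x: "\<bar>x\<bar> \<le> b" "\<bar>x'\<bar> \<le> b"
    and m: "m > 0" "\<And>y. \<bar>y\<bar> \<le> b + s \<Longrightarrow> m \<le> \<pi> y"
    and e: "e \<ge> 0" "\<And>y. \<bar>y\<bar> \<le> b + s \<Longrightarrow> \<bar>k x y - k x' y\<bar> \<le> e"
  shows "\<bar>kernel_op k f x - kernel_op k f x'\<bar> \<le> e / m * L2norm \<pi> f"
proof -
  have far: "k x y - k x' y = 0" if "\<bar>y\<bar> > b + s" for y
    using k_vanishes[OF x(1) that] k_vanishes[OF x(2) that] by simp
  have near: "\<bar>k x y - k x' y\<bar> \<le> e" for y
    using e far by (cases "\<bar>y\<bar> \<le> b + s") auto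
  have "kernel_op k f x - kernel_op k f x' = (\<integral>y. f y * k x y - f y * k x' y \<partial>lborel)"
    unfolding kernel_op_def using kernel_integrable[OF f] kernel_integrable[OF f]
    by (rule Bochner_Integration.integral_diff[symmetric])
  also have "\<dots> = (\<integral>y. f y * (k x y - k x' y) \<partial>lborel)"
    by (simp add: right_diff_distrib)
  also have "\<bar>\<dots>\<bar> \<le> e / m * L2norm \<pi> f"
    using borel_measurable_diff[OF k_section_measurable k_section_measurable]
    by (rule integral_times_compact_support(2)[OF f _ near far m])
  finally show ?thesis .
qed

lemma kernel_op_equicontinuous:
  assumes x: "x \<in> {-b..b}" and e: "e > 0"
  obtains d where "d > 0"
    "\<And>f y. L2 \<pi> f \<Longrightarrow> L2norm \<pi> f \<le> B \<Longrightarrow> y \<in> {-b..b} \<Longrightarrow> \<bar>x - y\<bar> < d \<Longrightarrow>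
       \<bar>kernel_op k f x - kernel_op k f y\<bar> < e"
proof -
  obtain m where m: "m > 0" "\<And>y. \<bar>y\<bar> \<le> b + s \<Longrightarrow> m \<le> \<pi> y"
    by (rule pi_bounded_below) blast
  define e' where "e' = m * (e / (\<bar>B\<bar> + 1))"
  have "e' / m = e / (\<bar>B\<bar> + 1)"
    unfolding e'_def using m(1) by simp
  then have "e' / m * \<bar>B\<bar> < e / (\<bar>B\<bar> + 1) * (\<bar>B\<bar> + 1)"
    using e by (simp only:) (intro mult_strict_left_mono, auto)
  then have e': "e' > 0" "e' / m * \<bar>B\<bar> < e"
    using e m(1) by (simp_all add: e'_def)
  define A where "A = {-b..b} \<times> {-(b + s)..b + s}"
  have "continuous_on A (\<lambda>z. k (fst z) (snd z))"
    using k_cont unfolding case_prod_beta' by (rule continuous_on_subset) simp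
  moreover have "compact A"
    unfolding A_def by (intro compact_Times compact_Icc)
  ultimately have "uniformly_continuous_on A (\<lambda>z. k (fst z) (snd z))"
    by (rule compact_uniformly_continuous)
  then obtain d where d: "d > 0" and close: "\<And>z z'. z \<in> A \<Longrightarrow> z' \<in> A \<Longrightarrow> dist z' z < d \<Longrightarrow>
      dist (k (fst z') (snd z')) (k (fst z) (snd z)) < e'"
    using e'(1) unfolding uniformly_continuous_on_def by metis
  have "\<bar>kernel_op k f x - kernel_op k f y\<bar> < e"
    if f: "L2 \<pi> f" "L2norm \<pi> f \<le> B" and y: "y \<in> {-b..b}" "\<bar>x - y\<bar> < d" for f y
  proof -
    have "\<bar>k x w - k y w\<bar> \<le> e'" if "\<bar>w\<bar> \<le> b + s" for w
    proof -
      have "(x, w) \<in> A" "(y, w) \<in> A" using x y(1) that by (auto simp: A_def abs_le_iff)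
      moreover have "dist (y, w) (x, w) < d"
        using y(2) by (simp add: dist_Pair_Pair dist_real_def abs_minus_commute)
      ultimately have "dist (k y w) (k x w) < e'" using close by fastforce
      then show ?thesis by (simp add: dist_real_def abs_minus_commute)
    qed
    then have "\<bar>kernel_op k f x - kernel_op k f y\<bar> \<le> e' / m * L2norm \<pi> f"
      using x y(1) e'(1) by (intro kernel_op_diff_le[OF f(1) _ _ m]) auto
    also have "\<dots> \<le> e' / m * \<bar>B\<bar>"
      using f(2) e'(1) m(1) by (intro mult_left_mono) auto
    finally show ?thesis using e'(2) by simp
  qed
  with d show thesis by (rule that)
qed

lemma kernel_op_uniformly_Cauchy_subseq:
  assumes fs: "\<And>n. L2 \<pi> (fs n)" "\<And>n. L2norm \<pi> (fs n) \<le> B"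
  obtains r :: "nat \<Rightarrow> nat"
  where "strict_mono r" "uniformly_Cauchy_on {-b..b} (\<lambda>n. kernel_op k (fs (r n)))"
proof -
  obtain m where m: "m > 0" "\<And>y. \<bar>y\<bar> \<le> b + s \<Longrightarrow> m \<le> \<pi> y"
    by (rule pi_bounded_below) blast
  have bounded: "norm (kernel_op k (fs n) x) \<le> Q / m * B" if "x \<in> {-b..b}" for n x
  proof -
    have "\<bar>kernel_op k (fs n) x\<bar> \<le> Q / m * L2norm \<pi> (fs n)"
      using that by (intro kernel_op_le[OF fs(1) _ m]) auto
    also have "\<dots> \<le> Q / m * B"
      using fs(2) Q_nonneg m(1) by (intro mult_left_mono) auto
    finally show ?thesis by simp
  qed
  have equicont: "\<exists>d>0. \<forall>n y. y \<in> {-b..b} \<and> norm (x - y) < d \<longrightarrow>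
      norm (kernel_op k (fs n) x - kernel_op k (fs n) y) < e"
    if "x \<in> {-b..b}" "e > 0" for x e
    using kernel_op_equicontinuous[OF that, of B] fs by (metis real_norm_def)
  obtain g r where "continuous_on {-b..b} g" and r: "strict_mono (r :: nat \<Rightarrow> nat)"
    and conv: "\<And>e. 0 < e \<Longrightarrow> \<exists>N. \<forall>n x. n \<ge> N \<and> x \<in> {-b..b} \<longrightarrow>
                 norm (kernel_op k (fs (r n)) x - g x) < e"
    by (rule Arzela_Ascoli[of "{-b..b}" "\<lambda>n. kernel_op k (fs n)", OF _ bounded equicont]) auto
  have "uniform_limit {-b..b} (\<lambda>n. kernel_op k (fs (r n))) g sequentially"
    unfolding uniform_limit_sequentially_iff dist_norm using conv by blast
  then have "uniformly_Cauchy_on {-b..b} (\<lambda>n. kernel_op k (fs (r n)))"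
    by (intro uniformly_convergent_Cauchy) (auto simp: uniformly_convergent_on_def)
  with r show thesis by (rule that)
qed

lemma kernel_op_eq_0:
  assumes f: "\<And>y. \<bar>y\<bar> > a \<Longrightarrow> f y = 0" and x: "\<bar>x\<bar> > a + s"
  shows "kernel_op k f x = 0"
proof -
  have "(\<lambda>y. f y * k x y) = (\<lambda>y. 0)"
  proof
    fix y
    show "f y * k x y = 0"
    proof (cases "\<bar>y\<bar> \<le> a")
      case True
      then have "\<bar>x - y\<bar> > s" using x by linarith
      then show ?thesis using k_band by simp
    next
      case False
      then show ?thesis using f by simp
    qed
  qed
  then show ?thesis by (simp add: kernel_op_def)
qed

lemma bounded_borel_restricted_kernel_op:
  assumes f: "L2 \<pi> f"
  shows "bounded_borel (mult_op (indicator {-b..b}) (kernel_op k f))"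
proof -
  obtain m where m: "m > 0" "\<And>y. \<bar>y\<bar> \<le> b + s \<Longrightarrow> m \<le> \<pi> y"
    by (rule pi_bounded_below) blast
  have C: "0 \<le> Q / m * L2norm \<pi> f"
    using Q_nonneg m(1) L2norm_nonneg by (intro mult_nonneg_nonneg divide_nonneg_pos)
  show ?thesis
  proof (rule bounded_borelI)
    show "mult_op (indicator {-b..b}) (kernel_op k f) \<in> borel_measurable borel"
      unfolding mult_op_def[abs_def] using f
      by (intro borel_measurable_times borel_measurable_indicator atLeastAtMost_borel kernel_op_measurable)
         (simp add: L2_def)
    show "\<bar>mult_op (indicator {-b..b}) (kernel_op k f) x\<bar> \<le> Q / m * L2norm \<pi> f" for x
    proof (cases "x \<in> {-b..b}")
      case True
      then have "\<bar>x\<bar> \<le> b" by auto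
      then show ?thesis using kernel_op_le[OF f _ m] True by (simp add: mult_op_def)
    next
      case False
      then show ?thesis using C by (simp add: mult_op_def)
    qed
  qed
qed

lemma kernel_op_abs_le:
  assumes u: "bounded_borel u" "\<And>y. \<bar>u y\<bar> \<le> C"
  shows "\<bar>kernel_op k u x\<bar> \<le> C"
proof -
  have "L2 \<pi> (\<lambda>_. 1)"
    by (intro L2_if_bounded_borel[OF pimeas_prob_space] bounded_borelI[of _ 1]) auto
  from kernel_integrable[OF this, of x] have k_int: "integrable lborel (k x)"
    by simp
  have C: "0 \<le> C" using u(2)[of 0] by linarith
  have dom: "\<bar>u y * k x y\<bar> \<le> C * k x y" for y
    using u(2)[of y] k_nonneg[of x y] by (simp add: abs_mult mult_right_mono)
  have "\<bar>kernel_op k u x\<bar> \<le> (\<integral>y. C * k x y \<partial>lborel)"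
    unfolding kernel_op_def using kernel_integrable[OF L2_if_bounded_borel[OF pimeas_prob_space u(1)]] k_int
    by (intro integral_abs_bound_integral dom) auto
  also have "\<dots> = C * (\<integral>y. k x y \<partial>lborel)" by simp
  also have "\<dots> \<le> C * 1" using k_mass[of x] C by (rule mult_left_mono)
  finally show ?thesis by simp
qed

lemma sup_lipschitz_kernel_op: "sup_lipschitz 1 (kernel_op k)"
proof (rule sup_lipschitzI)
  fix u assume u: "bounded_borel u"
  then obtain C where "u \<in> borel_measurable borel" and C: "\<And>x. \<bar>u x\<bar> \<le> C"
    by (rule bounded_borelE) blast
  then show "bounded_borel (kernel_op k u)"
    using kernel_op_abs_le[OF u C] by (intro bounded_borelI[where C = C] kernel_op_measurable)
next
  fix u v :: "real \<Rightarrow> real" and e x :: real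
  assume u: "bounded_borel u" and v: "bounded_borel v" and e: "\<And>x. \<bar>u x - v x\<bar> \<le> e"
  have w: "bounded_borel (\<lambda>y. u y - v y)"
    using u v e by (intro bounded_borelI[where C = e] borel_measurable_diff) (auto simp: bounded_borel_def)
  have "kernel_op k u x - kernel_op k v x = kernel_op k (\<lambda>y. u y - v y) x"
    unfolding kernel_op_def left_diff_distrib
    using kernel_integrable[OF L2_if_bounded_borel[OF pimeas_prob_space u]]
      kernel_integrable[OF L2_if_bounded_borel[OF pimeas_prob_space v]]
    by (rule Bochner_Integration.integral_diff[symmetric])
  then show "\<bar>kernel_op k u x - kernel_op k v x\<bar> \<le> 1 * e"
    using kernel_op_abs_le[OF w e] by simp
qed

lemma sup_compact_op_restricted_kernel_op:
  assumes W: "\<And>f. L2 \<pi> f \<Longrightarrow> L2 \<pi> (W f)" "\<And>f. L2 \<pi> f \<Longrightarrow> L2norm \<pi> (W f) \<le> L2norm \<pi> f"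
  shows "sup_compact_op \<pi> (\<lambda>f. mult_op (indicator {-b..b}) (kernel_op k (W f)))"
  unfolding sup_compact_op_def
proof (intro conjI allI impI)
  show "L2 \<pi> f \<Longrightarrow> bounded_borel (mult_op (indicator {-b..b}) (kernel_op k (W f)))" for f
    by (rule bounded_borel_restricted_kernel_op[OF W(1)])
next
  fix fs :: "nat \<Rightarrow> real \<Rightarrow> real" and B :: real
  assume fs: "\<forall>n. L2 \<pi> (fs n) \<and> L2norm \<pi> (fs n) \<le> B"
  then have Wfs: "\<And>n. L2 \<pi> (W (fs n))" "\<And>n. L2norm \<pi> (W (fs n)) \<le> B"
    using W order_trans by blast+
  obtain r :: "nat \<Rightarrow> nat" where r: "strict_mono r"
    and cauchy: "uniformly_Cauchy_on {-b..b} (\<lambda>n. kernel_op k (W (fs (r n))))"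
    by (rule kernel_op_uniformly_Cauchy_subseq[of "\<lambda>n. W (fs n)" B b, OF Wfs]) blast
  then show "\<exists>r. strict_mono r \<and> uniformly_Cauchy_on UNIV
      (\<lambda>n. mult_op (indicator {-b..b}) (kernel_op k (W (fs (r n)))))"
    using uniformly_Cauchy_on_UNIV_mult_indicator[OF cauchy] unfolding mult_op_def[abs_def] by blast
qed

lemma sup_compact_op_restr_in_kernel_op: "sup_compact_op \<pi> (restr_in a (kernel_op k))"
  using sup_compact_op_restricted_kernel_op[of "\<lambda>f. f" a] by (simp add: restr_in_eq_mult_op comp_def)

lemma sup_compact_op_kernel_op_restr_in:
  assumes h: "h \<in> borel_measurable borel" "\<And>x. \<bar>h x\<bar> \<le> 1"
  shows "sup_compact_op \<pi> (kernel_op k \<circ> restr_in a (mult_op h))"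
proof -
  define ha where "ha = (\<lambda>x. indicator {-a..a} x * h x)"
  have ha: "ha \<in> borel_measurable borel" "\<And>x. \<bar>ha x\<bar> \<le> 1"
    unfolding ha_def using h
    by (auto intro!: borel_measurable_times borel_measurable_indicator simp: indicator_def)
  have restr: "restr_in a (mult_op h) = mult_op ha"
    by (intro ext) (simp add: restr_in_def mult_op_def ha_def)
  have supp: "kernel_op k (mult_op ha f) =
      mult_op (indicator {-(a + s)..a + s}) (kernel_op k (mult_op ha f))" for f
  proof
    fix x
    show "kernel_op k (mult_op ha f) x =
        mult_op (indicator {-(a + s)..a + s}) (kernel_op k (mult_op ha f)) x"
    proof (cases "\<bar>x\<bar> \<le> a + s")
      case True
      then show ?thesis by (simp add: mult_op_def indicator_def abs_le_iff)
    next
      case False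
      then have "kernel_op k (mult_op ha f) x = 0"
        by (intro kernel_op_eq_0[of a]) (auto simp: mult_op_def ha_def indicator_def)
      then show ?thesis by (simp add: mult_op_def)
    qed
  qed
  have "sup_compact_op \<pi> (\<lambda>f. mult_op (indicator {-(a + s)..a + s}) (kernel_op k (mult_op ha f)))"
    using L2_mult_op[OF ha] by (intro sup_compact_op_restricted_kernel_op)
  then show ?thesis unfolding restr comp_def supp[symmetric] .
qed

lemma sup_compact_op_restr_out_kernel_op_restr_in:
  assumes h: "h \<in> borel_measurable borel" "\<And>x. \<bar>h x\<bar> \<le> 1"
  shows "sup_compact_op \<pi> (restr_out a (kernel_op k) \<circ> restr_in a (mult_op h))"
  using sup_compact_op_restr_out[OF sup_compact_op_kernel_op_restr_in[OF h]]
  by (simp add: restr_out_eq_mult_op comp_assoc)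

lemma sup_compact_op_funpow_restr_in:
  assumes h: "h \<in> borel_measurable borel" "\<And>x. \<bar>h x\<bar> \<le> 1" and n: "n \<ge> 1"
  shows "sup_compact_op \<pi>
    (((\<lambda>f x. restr_out a (mult_op h) f x + restr_out a (kernel_op k) f x) ^^ n) \<circ> restr_in a (mult_op h))"
proof -
  define V where "V = (\<lambda>f x. restr_out a (mult_op h) f x + restr_out a (kernel_op k) f x)"
  obtain j where j: "n = Suc j" using n by (cases n) auto
  have "sup_lipschitz (1 * 1 + 1 * 1) V"
    unfolding V_def restr_out_eq_mult_op
    by (intro sup_lipschitz_add sup_lipschitz_comp sup_lipschitz_mult_indicator compl_atLeastAtMost_borel
        sup_lipschitz_mult_op[OF h] sup_lipschitz_kernel_op)
  then have lip: "sup_lipschitz (2 ^ j) (V ^^ j)"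
    using sup_lipschitz_funpow by simp
  have absorb: "V \<circ> restr_in a (mult_op h) = restr_out a (kernel_op k) \<circ> restr_in a (mult_op h)"
    by (intro ext) (simp add: V_def restr_out_def restr_in_def mult_op_def indicator_def)
  have "(V ^^ n) \<circ> restr_in a (mult_op h) =
      (V ^^ j) \<circ> (restr_out a (kernel_op k) \<circ> restr_in a (mult_op h))"
    unfolding j funpow_Suc_right comp_assoc absorb ..
  then show ?thesis
    unfolding V_def[symmetric]
    using sup_compact_op_comp[OF lip sup_compact_op_restr_out_kernel_op_restr_in[OF h]] by simp
qed

end

lemma continuous_on_tker:
  assumes pi_pos: "\<And>x. 0 < \<pi> x" and pi_cont: "continuous_on UNIV \<pi>"
    and q_cont: "continuous_on UNIV (\<lambda>(x, y). q x y)"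
  shows "continuous_on UNIV (\<lambda>(x, y). tker \<pi> q x y)"
proof -
  have q: "continuous_on UNIV (\<lambda>z::real \<times> real. q (fst z) (snd z))"
    using q_cont by (simp add: case_prod_beta')
  have "continuous_on UNIV (\<lambda>z::real \<times> real. q (snd z) (fst z))"
    using continuous_on_compose2[OF q, of UNIV "\<lambda>z. (snd z, fst z)"] by (simp add: continuous_intros)
  moreover have "continuous_on UNIV (\<lambda>z::real \<times> real. \<pi> (fst z))"
    "continuous_on UNIV (\<lambda>z::real \<times> real. \<pi> (snd z))"
    by (rule continuous_on_compose2[OF pi_cont]; auto intro!: continuous_intros)+
  ultimately show ?thesis
    unfolding tker_def case_prod_beta' using pi_pos
    by (intro continuous_intros q) (auto simp: less_imp_neq[symmetric])
qed

lemma banded_kernel_tker: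
  assumes pi_pos: "\<And>x. 0 < \<pi> x" and pi_cont: "continuous_on UNIV \<pi>"
    and pi_int: "integrable lborel \<pi>" and pi_one: "(\<integral>y. \<pi> y \<partial>lborel) = 1"
    and q_nonneg: "\<And>x y. 0 \<le> q x y" and q_le: "\<And>x y. q x y \<le> Q"
    and q_cont: "continuous_on UNIV (\<lambda>(x, y). q x y)"
    and q_int: "\<And>x. integrable lborel (q x)" and q_one: "\<And>x. (\<integral>y. q x y \<partial>lborel) = 1"
    and q_supp: "\<And>x u. \<bar>u\<bar> > s \<Longrightarrow> q x (x + u) = 0"
  shows "banded_kernel \<pi> (tker \<pi> q) s Q"
proof
  show t_nonneg: "0 \<le> tker \<pi> q x y" for x y
    unfolding tker_def using q_nonneg[of x y] q_nonneg[of y x] pi_pos[of x] pi_pos[of y] by simp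
  have t_le_q: "tker \<pi> q x y \<le> q x y" for x y
    unfolding tker_def by simp
  show "tker \<pi> q x y \<le> Q" for x y
    using t_le_q q_le order_trans by blast
  show t_cont: "continuous_on UNIV (\<lambda>(x, y). tker \<pi> q x y)"
    by (rule continuous_on_tker[OF pi_pos pi_cont q_cont])
  show "tker \<pi> q x y = 0" if "\<bar>x - y\<bar> > s" for x y
    using q_supp[of "y - x" x] that t_nonneg[of x y] t_le_q[of x y] by simp
  show "(\<integral>y. tker \<pi> q x y \<partial>lborel) \<le> 1" for x
  proof -
    have "continuous_on UNIV (tker \<pi> q x)"
      using continuous_on_compose2[OF t_cont, of UNIV "\<lambda>y. (x, y)"] by (simp add: continuous_intros)
    then have "tker \<pi> q x \<in> borel_measurable borel"
      by (rule borel_measurable_continuous_onI)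
    then have "integrable lborel (tker \<pi> q x)"
      using t_nonneg t_le_q q_nonneg by (intro Bochner_Integration.integrable_bound[OF q_int[of x]]) auto
    then show ?thesis
      using integral_mono[OF _ q_int t_le_q] q_one by simp
  qed
qed (fact pi_pos pi_cont pi_int pi_one)+

theorem lemma3p1:
  fixes \<pi> :: "real \<Rightarrow> real" and q :: "real \<Rightarrow> real \<Rightarrow> real" and a s :: real
  assumes pi_pos: "\<And>x. \<pi> x > 0"
    and pi_cont: "continuous_on UNIV \<pi>"
    and pi_int: "integrable lborel \<pi>"
    and pi_one: "(\<integral>y. \<pi> y \<partial>lborel) = 1"
    and q_nonneg: "\<And>x y. q x y \<ge> 0"
    and q_bdd: "\<exists>B. \<forall>x y. q x y \<le> B"
    and q_cont: "continuous_on UNIV (\<lambda>(x, y). q x y)"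
    and q_int: "\<And>x. integrable lborel (q x)"
    and q_one: "\<And>x. (\<integral>y. q x y \<partial>lborel) = 1"
    and s_pos: "s > 0"
    and q_supp: "\<And>x u. \<bar>u\<bar> > s \<Longrightarrow> q x (x + u) = 0"
    and a_pos: "a > 0"
  shows "compact_op \<pi> (restr_in a (Top \<pi> q))
    \<and> compact_op \<pi> (restr_out a (Top \<pi> q) \<circ> restr_in a (Rop \<pi> q))
    \<and> (\<forall>n::nat. n \<ge> 1 \<longrightarrow>
         compact_op \<pi> (((\<lambda>f x. restr_out a (Rop \<pi> q) f x + restr_out a (Top \<pi> q) f x) ^^ n)
                        \<circ> restr_in a (Rop \<pi> q)))"
proof -
  obtain Q where "\<And>x y. q x y \<le> Q" using q_bdd by blast
  then interpret K: banded_kernel \<pi> "tker \<pi> q" s Q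
    using banded_kernel_tker pi_pos pi_cont pi_int pi_one q_nonneg q_cont q_int q_one q_supp by blast
  have T: "Top \<pi> q = kernel_op (tker \<pi> q)"
    by (intro ext) (simp add: Top_def kernel_op_def)
  have R: "Rop \<pi> q = mult_op (rfun \<pi> q)"
    by (intro ext) (simp add: Rop_def mult_op_def)
  have r: "rfun \<pi> q \<in> borel_measurable borel" "\<And>x. \<bar>rfun \<pi> q x\<bar> \<le> 1"
    unfolding rfun_def[abs_def] using K.kernel_mass_measurable K.kernel_mass_nonneg K.k_mass
    by (auto simp: abs_le_iff)
  show ?thesis
    unfolding T R
    using compact_op_if_sup_compact_op[OF K.pimeas_prob_space] K.sup_compact_op_restr_in_kernel_op
      K.sup_compact_op_restr_out_kernel_op_restr_in[OF r] K.sup_compact_op_funpow_restr_in[OF r]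
    by blast
qed

end
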